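(* Let $(X_t)_{t\ge0}$ be the Ornstein--Uhlenbeck process $dX_t=-X_t\,dt+\sqrt2\,dB_t$ started from a norm-subgaussian random vector $X_0=X$ in $\mathbb{R}^d$. If $T_1\ge\log\frac{\|X\|_{\psi_2}}{\sqrt d}$, then $\|X_{T_1}\|_{\psi_2}\le3\sqrt d$.
   Context: For an $\mathbb{R}^d$-valued random variable $X$, $\|X\|_{\psi_2}:=\inf\{t>0:\mathbb{E}[e^{\|X\|^2/t^2}]\le2\}$ ($\|\cdot\|$ Euclidean norm); $X$ is norm-subgaussian if this is finite. *)

theory Defs
  imports "HOL-Probability.Probability"
begin

definition psi2_norm :: "'a measure \<Rightarrow> ('a \<Rightarrow> 'b::real_normed_vector) \<Rightarrow> real" where
  "psi2_norm M X = Inf {t::real. t > 0 \<and>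
      (\<integral>\<^sup>+ \<omega>. ennreal (exp ((norm (X \<omega>))\<^sup>2 / t\<^sup>2)) \<partial>M) \<le> 2}"

definition norm_subgaussian :: "'a measure \<Rightarrow> ('a \<Rightarrow> 'b::real_normed_vector) \<Rightarrow> bool" where
  "norm_subgaussian M X \<longleftrightarrow> (\<exists>t::real. t > 0 \<and>
      (\<integral>\<^sup>+ \<omega>. ennreal (exp ((norm (X \<omega>))\<^sup>2 / t\<^sup>2)) \<partial>M) \<le> 2)"

definition std_gaussian_vec :: "'a measure \<Rightarrow> ('a \<Rightarrow> real ^ 'd) \<Rightarrow> bool" where
  "std_gaussian_vec M Z \<longleftrightarrow>
     prob_space.indep_vars M (\<lambda>_. borel) (\<lambda>i \<omega>. Z \<omega> $ i) UNIV \<and>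
     (\<forall>i. distributed M lborel (\<lambda>\<omega>. Z \<omega> $ i) std_normal_density)"

text \<open>Time-T value of the Ornstein--Uhlenbeck process dX = -X dt + sqrt 2 dB started
  at X_0 = X (Mehler representation), driven by a standard Gaussian Z independent of X:
  X_T = e^{-T} X + sqrt(1 - e^{-2T}) Z.\<close>
definition ou_at :: "('a \<Rightarrow> real ^ 'd) \<Rightarrow> ('a \<Rightarrow> real ^ 'd) \<Rightarrow> real \<Rightarrow> 'a \<Rightarrow> real ^ 'd" where
  "ou_at X Z T \<omega> = exp (- T) *\<^sub>R X \<omega> + sqrt (1 - exp (- 2 * T)) *\<^sub>R Z \<omega>"

end

theory Submission
  imports Defs
begin

text \<open>Let \<open>a = exp (-T)\<close>, take \<open>t > 3 sqrt d\<close> and \<open>s\<close> slightly above the psi_2 norm of \<open>X\<close>,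
  so that \<open>a s < t / 3\<close> by the choice of \<open>T\<close>. Since the Gaussian coefficient of \<open>X\<^sub>T\<close> is at most 1,
  the triangle inequality gives \<open>|X\<^sub>T| / t \<le> 1/3 |X| / s + 2/3 |Z| / (2 sqrt d)\<close>, and convexity
  of \<open>u \<mapsto> exp (u\<^sup>2)\<close> bounds \<open>E exp (|X\<^sub>T|\<^sup>2 / t\<^sup>2)\<close> by \<open>1/3 * 2 + 2/3 * E exp (|Z|\<^sup>2 / 4 d)\<close>.
  Jensen's inequality over the coordinates and \<open>E exp (g\<^sup>2 / 4) = sqrt 2\<close> for a standard normal
  \<open>g\<close> bound the last expectation by \<open>sqrt 2\<close>, and \<open>(2 + 2 sqrt 2) / 3 \<le> 2\<close>.\<close>

lemma psi2_norm_le: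
  fixes Y :: "'a \<Rightarrow> 'b::real_normed_vector"
  assumes "0 \<le> c"
    and "\<And>t. c < t \<Longrightarrow> (\<integral>\<^sup>+\<omega>. ennreal (exp ((norm (Y \<omega>))\<^sup>2 / t\<^sup>2)) \<partial>M) \<le> 2"
  shows "psi2_norm M Y \<le> c"
  unfolding psi2_norm_def
proof (rule dense_ge)
  fix t assume "c < t"
  with assms show "Inf {t. 0 < t \<and> (\<integral>\<^sup>+\<omega>. ennreal (exp ((norm (Y \<omega>))\<^sup>2 / t\<^sup>2)) \<partial>M) \<le> 2} \<le> t"
    by (intro cInf_lower) (auto simp: bdd_below_def intro!: exI[of _ 0])
qed

lemma psi2_norm_lessE:
  fixes X :: "'a \<Rightarrow> 'b::real_normed_vector"
  assumes "norm_subgaussian M X" and "psi2_norm M X < r"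
  obtains s where "0 < s" "s < r" "(\<integral>\<^sup>+\<omega>. ennreal (exp ((norm (X \<omega>))\<^sup>2 / s\<^sup>2)) \<partial>M) \<le> 2"
  using cInf_lessD[of "{t. 0 < t \<and> (\<integral>\<^sup>+\<omega>. ennreal (exp ((norm (X \<omega>))\<^sup>2 / t\<^sup>2)) \<partial>M) \<le> 2}" r]
    assms by (auto simp: psi2_norm_def norm_subgaussian_def)

lemma exp_power2_le_convex_comb:
  fixes u x y l :: real
  assumes "0 \<le> l" "l \<le> 1" "0 \<le> u" "u \<le> l * x + (1 - l) * y"
  shows "exp (u\<^sup>2) \<le> l * exp (x\<^sup>2) + (1 - l) * exp (y\<^sup>2)"
proof -
  have "u\<^sup>2 \<le> (l * x + (1 - l) * y)\<^sup>2"
    using assms by (intro power_mono) auto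
  also have "\<dots> \<le> l * x\<^sup>2 + (1 - l) * y\<^sup>2"
    using convex_onD[OF convex_power2, of "1 - l" x y] assms by simp
  finally have "exp (u\<^sup>2) \<le> exp (l * x\<^sup>2 + (1 - l) * y\<^sup>2)"
    by simp
  also have "\<dots> \<le> l * exp (x\<^sup>2) + (1 - l) * exp (y\<^sup>2)"
    using convex_onD[OF exp_convex, of "1 - l" "x\<^sup>2" "y\<^sup>2"] assms by simp
  finally show ?thesis .
qed

lemma nn_integral_exp_power2_le_convex_comb:
  fixes u x y :: "'a \<Rightarrow> real" and l :: real
  assumes "x \<in> borel_measurable M" "y \<in> borel_measurable M"
    and "0 \<le> l" "l \<le> 1"
    and "\<And>\<omega>. 0 \<le> u \<omega>" "\<And>\<omega>. u \<omega> \<le> l * x \<omega> + (1 - l) * y \<omega>"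
  shows "(\<integral>\<^sup>+\<omega>. ennreal (exp ((u \<omega>)\<^sup>2)) \<partial>M)
    \<le> ennreal l * (\<integral>\<^sup>+\<omega>. ennreal (exp ((x \<omega>)\<^sup>2)) \<partial>M)
      + ennreal (1 - l) * (\<integral>\<^sup>+\<omega>. ennreal (exp ((y \<omega>)\<^sup>2)) \<partial>M)"
proof -
  have "(\<integral>\<^sup>+\<omega>. ennreal (exp ((u \<omega>)\<^sup>2)) \<partial>M)
      \<le> (\<integral>\<^sup>+\<omega>. ennreal l * ennreal (exp ((x \<omega>)\<^sup>2)) + ennreal (1 - l) * ennreal (exp ((y \<omega>)\<^sup>2)) \<partial>M)"
    using assms exp_power2_le_convex_comb
    by (intro nn_integral_mono) (simp flip: ennreal_mult ennreal_plus)
  also have "\<dots> = ennreal l * (\<integral>\<^sup>+\<omega>. ennreal (exp ((x \<omega>)\<^sup>2)) \<partial>M)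
      + ennreal (1 - l) * (\<integral>\<^sup>+\<omega>. ennreal (exp ((y \<omega>)\<^sup>2)) \<partial>M)"
    using assms(1,2) by (simp add: nn_integral_add nn_integral_cmult)
  finally show ?thesis .
qed

lemma nn_integral_exp_power2_div_4_std_normal:
  assumes "distributed M lborel Y std_normal_density"
  shows "(\<integral>\<^sup>+\<omega>. ennreal (exp ((Y \<omega>)\<^sup>2 / 4)) \<partial>M) = ennreal (sqrt 2)"
proof -
  have density: "std_normal_density x * exp (x\<^sup>2 / 4) = sqrt 2 * normal_density 0 (sqrt 2) x"
    for x :: real
    unfolding normal_density_def by (simp add: real_sqrt_mult field_simps flip: exp_add)
  have "(\<integral>\<^sup>+\<omega>. ennreal (exp ((Y \<omega>)\<^sup>2 / 4)) \<partial>M)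
      = (\<integral>\<^sup>+x. ennreal (std_normal_density x) * ennreal (exp (x\<^sup>2 / 4)) \<partial>lborel)"
    by (rule distributed_nn_integral[OF assms, symmetric]) simp
  also have "\<dots> = ennreal (sqrt 2) * (\<integral>\<^sup>+x. ennreal (normal_density 0 (sqrt 2) x) \<partial>lborel)"
    by (subst nn_integral_cmult[symmetric])
      (simp_all add: density normal_density_nonneg flip: ennreal_mult)
  also have "(\<integral>\<^sup>+x. ennreal (normal_density 0 (sqrt 2) x) \<partial>lborel) = 1"
    using prob_space.emeasure_space_1[OF prob_space_normal_density[of "sqrt 2" 0]]
    by (simp add: emeasure_density)
  finally show ?thesis by simp
qed

lemma exp_norm_power2_le_mean:
  fixes z :: "real ^ 'n" and c :: real
  shows "exp (c * (norm z)\<^sup>2 / CARD('n)) \<le> (\<Sum>i\<in>UNIV. exp (c * (z $ i)\<^sup>2)) / CARD('n)"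
proof -
  have "(norm z)\<^sup>2 = (\<Sum>i\<in>UNIV. (z $ i)\<^sup>2)"
    unfolding power2_norm_eq_inner inner_vec_def by (simp add: power2_eq_square)
  then have "c * (norm z)\<^sup>2 / CARD('n) = (\<Sum>i\<in>UNIV. (1 / CARD('n)) *\<^sub>R (c * (z $ i)\<^sup>2))"
    by (simp add: sum_distrib_left sum_divide_distrib)
  moreover have "exp (\<Sum>i\<in>UNIV. (1 / CARD('n)) *\<^sub>R (c * (z $ i)\<^sup>2))
      \<le> (\<Sum>i\<in>UNIV. (1 / CARD('n)) * exp (c * (z $ i)\<^sup>2))"
    by (rule convex_on_sum[OF _ _ exp_convex]) auto
  ultimately show ?thesis
    by (simp add: sum_divide_distrib)
qed

lemma std_gaussian_vec_measurable:
  assumes "std_gaussian_vec M Z"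
  shows "Z \<in> borel_measurable M"
proof -
  have coord: "distributed M lborel (\<lambda>\<omega>. Z \<omega> $ i) std_normal_density" for i
    using assms by (simp add: std_gaussian_vec_def)
  have "(\<lambda>\<omega>. Z \<omega> $ i) \<in> borel_measurable M" for i
    using distributed_measurable[OF coord[of i]] by simp
  then show ?thesis
    by (subst borel_measurable_euclidean_space) (auto simp: Basis_vec_def inner_axis)
qed

lemma nn_integral_exp_norm_power2_std_gaussian_vec:
  fixes Z :: "'a \<Rightarrow> real ^ 'd"
  assumes "std_gaussian_vec M Z"
  shows "(\<integral>\<^sup>+\<omega>. ennreal (exp ((norm (Z \<omega>))\<^sup>2 / (4 * CARD('d)))) \<partial>M) \<le> ennreal (sqrt 2)"
proof -
  have coord: "distributed M lborel (\<lambda>\<omega>. Z \<omega> $ i) std_normal_density" for i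
    using assms by (simp add: std_gaussian_vec_def)
  have "(\<integral>\<^sup>+\<omega>. ennreal (exp ((norm (Z \<omega>))\<^sup>2 / (4 * CARD('d)))) \<partial>M)
      \<le> (\<integral>\<^sup>+\<omega>. ennreal (1 / CARD('d)) * (\<Sum>i\<in>UNIV. ennreal (exp ((Z \<omega> $ i)\<^sup>2 / 4))) \<partial>M)"
  proof (rule nn_integral_mono)
    fix \<omega>
    have "exp ((norm (Z \<omega>))\<^sup>2 / (4 * CARD('d))) \<le> (1 / CARD('d)) * (\<Sum>i\<in>UNIV. exp ((Z \<omega> $ i)\<^sup>2 / 4))"
      using exp_norm_power2_le_mean[of "1/4" "Z \<omega>"] by simp
    then have "ennreal (exp ((norm (Z \<omega>))\<^sup>2 / (4 * CARD('d))))
        \<le> ennreal ((1 / CARD('d)) * (\<Sum>i\<in>UNIV. exp ((Z \<omega> $ i)\<^sup>2 / 4)))"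
      by (rule ennreal_leI)
    also have "\<dots> = ennreal (1 / CARD('d)) * (\<Sum>i\<in>UNIV. ennreal (exp ((Z \<omega> $ i)\<^sup>2 / 4)))"
      by (simp add: sum_nonneg flip: ennreal_mult)
    finally show "ennreal (exp ((norm (Z \<omega>))\<^sup>2 / (4 * CARD('d))))
        \<le> ennreal (1 / CARD('d)) * (\<Sum>i\<in>UNIV. ennreal (exp ((Z \<omega> $ i)\<^sup>2 / 4)))" .
  qed
  also have "\<dots> = ennreal (1 / CARD('d)) * (\<Sum>i\<in>UNIV. \<integral>\<^sup>+\<omega>. ennreal (exp ((Z \<omega> $ i)\<^sup>2 / 4)) \<partial>M)"
    using distributed_measurable[OF coord]
    by (simp add: nn_integral_cmult nn_integral_sum del: sum_ennreal)
  also have "\<dots> = ennreal (sqrt 2)"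
    by (simp add: nn_integral_exp_power2_div_4_std_normal[OF coord] ennreal_of_nat_eq_real_of_nat
        flip: ennreal_mult)
  finally show ?thesis .
qed

lemma exp_neg_mult_le_of_ln_divide_le:
  fixes k c T :: real
  assumes "0 < c" and "ln (k / c) \<le> T"
  shows "exp (- T) * k \<le> c"
proof (cases "0 < k")
  case True
  then have "k / c \<le> exp T"
    using assms by (metis divide_pos_pos exp_ln exp_le_cancel_iff)
  then show ?thesis
    using assms by (simp add: exp_minus field_simps)
next
  case False
  then show ?thesis
    using assms by (simp add: mult_nonneg_nonpos order.strict_implies_order order_trans[of _ 0])
qed

lemma norm_ou_at_le:
  assumes "0 \<le> T"
  shows "norm (ou_at X Z T \<omega>) \<le> exp (- T) * norm (X \<omega>) + norm (Z \<omega>)"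
proof -
  have "norm (ou_at X Z T \<omega>) \<le> exp (- T) * norm (X \<omega>) + sqrt (1 - exp (- 2 * T)) * norm (Z \<omega>)"
    unfolding ou_at_def using assms by (intro order_trans[OF norm_triangle_ineq]) simp
  also have "\<dots> \<le> exp (- T) * norm (X \<omega>) + norm (Z \<omega>)"
    using assms by (intro add_left_mono mult_left_le_one_le) auto
  finally show ?thesis .
qed

lemma norm_ou_at_divide_le_convex_comb:
  fixes X Z :: "'a \<Rightarrow> real ^ 'd"
  assumes "0 \<le> T" "0 < s" "3 * exp (- T) * s \<le> t" "3 * sqrt CARD('d) < t"
  shows "norm (ou_at X Z T \<omega>) / t
    \<le> 1/3 * (norm (X \<omega>) / s) + (1 - 1/3) * (norm (Z \<omega>) / (2 * sqrt CARD('d)))"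
proof -
  have t_pos: "0 < t"
    using assms(4) by (smt (verit) real_sqrt_ge_zero of_nat_0_le_iff)
  have "exp (- T) / t \<le> 1 / (3 * s)"
    using assms(2,3) t_pos by (simp add: field_simps)
  then have X_part: "exp (- T) * norm (X \<omega>) / t \<le> 1/3 * (norm (X \<omega>) / s)"
    using mult_right_mono[of "exp (- T) / t" "1 / (3 * s)" "norm (X \<omega>)"] by simp
  have "norm (Z \<omega>) / t \<le> norm (Z \<omega>) / (3 * sqrt CARD('d))"
    using assms(4) t_pos by (intro divide_left_mono) auto
  then have Z_part: "norm (Z \<omega>) / t \<le> (1 - 1/3) * (norm (Z \<omega>) / (2 * sqrt CARD('d)))"
    by simp
  have "norm (ou_at X Z T \<omega>) / t \<le> exp (- T) * norm (X \<omega>) / t + norm (Z \<omega>) / t"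
    using norm_ou_at_le[OF assms(1), of X Z \<omega>] t_pos
    by (simp add: divide_right_mono flip: add_divide_distrib)
  with X_part Z_part show ?thesis
    by linarith
qed

lemma nn_integral_exp_norm_ou_at_le_2:
  fixes X Z :: "'a \<Rightarrow> real ^ 'd"
  assumes "X \<in> borel_measurable M" "std_gaussian_vec M Z"
    and "0 \<le> T" "0 < s" "3 * exp (- T) * s \<le> t" "3 * sqrt CARD('d) < t"
    and X_bound: "(\<integral>\<^sup>+\<omega>. ennreal (exp ((norm (X \<omega>))\<^sup>2 / s\<^sup>2)) \<partial>M) \<le> 2"
  shows "(\<integral>\<^sup>+\<omega>. ennreal (exp ((norm (ou_at X Z T \<omega>))\<^sup>2 / t\<^sup>2)) \<partial>M) \<le> 2"
proof -
  define r where "r = 2 * sqrt CARD('d)"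
  have "0 < t"
    using assms(6) by (smt (verit) real_sqrt_ge_zero of_nat_0_le_iff)
  have "(\<integral>\<^sup>+\<omega>. ennreal (exp ((norm (ou_at X Z T \<omega>))\<^sup>2 / t\<^sup>2)) \<partial>M)
      = (\<integral>\<^sup>+\<omega>. ennreal (exp ((norm (ou_at X Z T \<omega>) / t)\<^sup>2)) \<partial>M)"
    by (simp add: power_divide)
  also have "\<dots> \<le> ennreal (1/3) * (\<integral>\<^sup>+\<omega>. ennreal (exp ((norm (X \<omega>) / s)\<^sup>2)) \<partial>M)
        + ennreal (1 - 1/3) * (\<integral>\<^sup>+\<omega>. ennreal (exp ((norm (Z \<omega>) / r)\<^sup>2)) \<partial>M)"
    unfolding r_def
    using assms(1-6) \<open>0 < t\<close> std_gaussian_vec_measurable[OF assms(2)]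
    by (intro nn_integral_exp_power2_le_convex_comb norm_ou_at_divide_le_convex_comb) auto
  also have "\<dots> \<le> ennreal (1/3) * 2 + ennreal (1 - 1/3) * ennreal (sqrt 2)"
    using X_bound nn_integral_exp_norm_power2_std_gaussian_vec[OF assms(2)]
    by (intro add_mono mult_left_mono) (simp_all add: r_def power_divide power_mult_distrib)
  also have "\<dots> = ennreal ((2 + 2 * sqrt 2) / 3)"
    by (simp add: field_simps flip: ennreal_mult ennreal_plus ennreal_numeral)
  also have "\<dots> \<le> 2"
    using real_sqrt_le_mono[of 2 4] by (simp flip: ennreal_numeral)
  finally show ?thesis .
qed

theorem lemma11:
  fixes M :: "'a measure" and X Z :: "'a \<Rightarrow> real ^ 'd" and T1 :: real
  assumes "prob_space M"
    and "X \<in> borel_measurable M"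
    and "norm_subgaussian M X"
    and "std_gaussian_vec M Z"
    and "prob_space.indep_var M borel X borel Z"
    and "T1 \<ge> 0"
    and "T1 \<ge> ln (psi2_norm M X / sqrt (real CARD('d)))"
  shows "psi2_norm M (ou_at X Z T1) \<le> 3 * sqrt (real CARD('d))"
proof (rule psi2_norm_le)
  fix t assume t: "3 * sqrt CARD('d) < t"
  have "exp (- T1) * psi2_norm M X \<le> sqrt CARD('d)"
    using assms(7) by (intro exp_neg_mult_le_of_ln_divide_le) auto
  with t have "psi2_norm M X < t / (3 * exp (- T1))"
    by (simp add: field_simps)
  then obtain s where "0 < s" "s < t / (3 * exp (- T1))"
    and "(\<integral>\<^sup>+\<omega>. ennreal (exp ((norm (X \<omega>))\<^sup>2 / s\<^sup>2)) \<partial>M) \<le> 2"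
    using psi2_norm_lessE[OF assms(3)] by blast
  with assms(2,4,6) t show "(\<integral>\<^sup>+\<omega>. ennreal (exp ((norm (ou_at X Z T1 \<omega>))\<^sup>2 / t\<^sup>2)) \<partial>M) \<le> 2"
    by (intro nn_integral_exp_norm_ou_at_le_2) (auto simp: field_simps)
qed simp

end
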